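(* (a) If $d\ge 3$ is odd, then $\operatorname{triv}(d,d-1)=\left\lfloor \frac{d-1}{6}\right\rfloor+1$ and $\operatorname{sign}(d,d-1)=\left\lfloor \frac{d-1}{6}\right\rfloor$. (b) If $d\ge 4$ is even, then $\operatorname{triv}(d,d-1)=\operatorname{sign}(d,d-1)=\left\lfloor \frac{d+2}{6}\right\rfloor$.
   Context: $\Bbbk$ is an algebraically closed field of characteristic $0$. For an integer $d\ge 1$, $A(d)=\Bbbk[x_1,x_2,x_3]/(x_1^d,x_2^d,x_3^d)=\bigoplus_j A(d)_j$ with its standard grading. $S_3$ acts on $A(d)$ by permuting variables. The linear map $E:A(d)_{j+1}\to A(d)_j$ is defined on the monomial basis by $E(x_1^{a_1}x_2^{a_2}x_3^{a_3})=\sum_{k=1}^{3} a_k(d-a_k)\,x_1^{a_1}\cdots x_k^{a_k-1}\cdots x_3^{a_3}$; it commutes with the $S_3$-action. $\operatorname{triv}(d,j)$ and $\operatorname{sign}(d,j)$ denote the multiplicities of the trivial and sign representations of $S_3$ in $\operatorname{Ker}(E)\cap A(d)_j$. *)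

theory Defs
  imports "HOL-Computational_Algebra.Polynomial" "HOL-Combinatorics.Permutations" "HOL-Library.Function_Algebras"
begin

text \<open>Exponent vectors of monomials in x_1,x_2,x_3 are functions a :: nat => nat
  supported on the index set {0,1,2} (index i stands for variable x_(i+1)).
  Elements of A(d)_j are coefficient functions on monomials supported on the
  monomial basis of A(d)_j.\<close>

definition mons :: "nat \<Rightarrow> nat \<Rightarrow> (nat \<Rightarrow> nat) set" where
  "mons d j = {a. (\<forall>i. i \<notin> {0,1,2} \<longrightarrow> a i = 0) \<and> (\<forall>i\<in>{0,1,2}. a i < d)
                  \<and> (\<Sum>i\<in>{0,1,2}. a i) = j}"

definition Acomp :: "'k itself \<Rightarrow> nat \<Rightarrow> nat \<Rightarrow> ((nat \<Rightarrow> nat) \<Rightarrow> 'k::field) set" where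
  "Acomp _ d j = {f. \<forall>a. a \<notin> mons d j \<longrightarrow> f a = 0}"

text \<open>The operator E, linear extension of
  E(x^a) = sum_k a_k (d - a_k) x^(a - e_k); coefficient of x^b in E(f).\<close>
definition Eop :: "nat \<Rightarrow> ((nat \<Rightarrow> nat) \<Rightarrow> 'k::field) \<Rightarrow> ((nat \<Rightarrow> nat) \<Rightarrow> 'k)" where
  "Eop d f = (\<lambda>b. \<Sum>k\<in>{0,1,2}.
      of_nat ((b k + 1) * (d - (b k + 1))) * f (b(k := b k + 1)))"

text \<open>Action of a permutation s of {0,1,2}: s . x_i = x_(s i), so
  s . x^a = x^(a o inv s), i.e. (s . f)(b) = f (b o s).\<close>
definition act :: "(nat \<Rightarrow> nat) \<Rightarrow> ((nat \<Rightarrow> nat) \<Rightarrow> 'k) \<Rightarrow> ((nat \<Rightarrow> nat) \<Rightarrow> 'k)" where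
  "act s f = (\<lambda>b. f (b \<circ> s))"

definition kerE :: "'k itself \<Rightarrow> nat \<Rightarrow> nat \<Rightarrow> ((nat \<Rightarrow> nat) \<Rightarrow> 'k::field) set" where
  "kerE t d j = {f \<in> Acomp t d j. Eop d f = (\<lambda>_. 0)}"

definition fscale :: "'k::field \<Rightarrow> ((nat \<Rightarrow> nat) \<Rightarrow> 'k) \<Rightarrow> ((nat \<Rightarrow> nat) \<Rightarrow> 'k)" where
  "fscale c f = (\<lambda>x. c * f x)"

text \<open>Multiplicity of the trivial representation = dimension of the S3-isotypic
  component of type trivial; similarly for sign (irreducible reps are 1-dimensional).\<close>
definition triv :: "'k::field itself \<Rightarrow> nat \<Rightarrow> nat \<Rightarrow> nat" where
  "triv t d j = vector_space.dim (fscale :: 'k \<Rightarrow> _)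
     {f \<in> kerE t d j. \<forall>s. s permutes {0,1,2} \<longrightarrow> act s f = f}"

definition sgn_mult :: "'k::field itself \<Rightarrow> nat \<Rightarrow> nat \<Rightarrow> nat" where
  "sgn_mult t d j = vector_space.dim (fscale :: 'k \<Rightarrow> _)
     {f \<in> kerE t d j. \<forall>s. s permutes {0,1,2} \<longrightarrow> act s f = fscale (of_int (sign s)) f}"

definition alg_closed :: "'k::field itself \<Rightarrow> bool" where
  "alg_closed _ \<longleftrightarrow> (\<forall>p :: 'k poly. degree p > 0 \<longrightarrow> (\<exists>x. poly p x = 0))"

end

theory Submission
  imports Defs
begin

text \<open>
  For \<open>1 \<le> n < d\<close> the operator \<open>E\<close> maps \<open>A(d)\<^sub>n\<close> onto \<open>A(d)\<^sub>n\<^sub>-\<^sub>1\<close>. Since \<open>E\<close> commutes with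
  \<open>S\<^sub>3\<close>, averaging over \<open>S\<^sub>3\<close> (characteristic zero) shows that \<open>E\<close> stays surjective on each
  isotypic component \<open>V\<^sub>n\<close>, so by rank--nullity the multiplicity in \<open>Ker(E) \<inter> A(d)\<^sub>n\<close> is
  \<open>dim V\<^sub>n - dim V\<^sub>n\<^sub>-\<^sub>1\<close>. For \<open>n < d\<close> the invariants of \<open>A(d)\<^sub>n\<close> have a basis of orbit sums
  indexed by the partitions of \<open>n\<close> into at most three parts, and the alternating elements a
  basis of signed orbit sums indexed by the partitions into three distinct parts; counting
  these partitions gives the formulas.
\<close>

lemma sum_apply: "(\<Sum>s\<in>S. h s) x = (\<Sum>s\<in>S. h s x)"
  by (induction S rule: infinite_finite_induct) auto

lemma fscale_apply [simp]: "fscale c f x = c * f x"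
  by (simp add: fscale_def)

interpretation coeffs: vector_space "fscale :: 'k::field \<Rightarrow> ((nat \<Rightarrow> nat) \<Rightarrow> 'k) \<Rightarrow> _"
  by unfold_locales (auto simp: fscale_def fun_eq_iff algebra_simps)

subsection \<open>Rank--nullity on a finite-dimensional subspace\<close>

lemma (in vector_space) span_inter_span_disjoint_eq_0:
  assumes B: "independent B" "finite B" and CD: "C \<subseteq> B" "D \<subseteq> B" "C \<inter> D = {}"
    and x: "x \<in> span C" "x \<in> span D"
  shows "x = 0"
proof -
  have fin: "finite C" "finite D" using B(2) CD(1,2) finite_subset by auto
  obtain u where u: "x = (\<Sum>v\<in>C. scale (u v) v)" using x(1) span_finite[OF fin(1)] by auto
  obtain w where w: "x = (\<Sum>v\<in>D. scale (w v) v)" using x(2) span_finite[OF fin(2)] by auto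
  define g where "g v = (if v \<in> C then u v else - w v)" for v
  have "(\<Sum>v\<in>C \<union> D. scale (g v) v) = (\<Sum>v\<in>C. scale (g v) v) + (\<Sum>v\<in>D. scale (g v) v)"
    using fin CD(3) by (rule sum.union_disjoint)
  also have "\<dots> = (\<Sum>v\<in>C. scale (u v) v) + (\<Sum>v\<in>D. - scale (w v) v)"
    using CD(3) by (auto simp: g_def intro!: arg_cong2[where f = "(+)"] sum.cong)
  also have "\<dots> = 0" using u w by (simp add: sum_negf)
  finally have sum0: "(\<Sum>v\<in>C \<union> D. scale (g v) v) = 0" .
  have "g v = 0" if "v \<in> C" for v
    using B(1)[unfolded independent_explicit_finite_subsets, rule_format, of "C \<union> D" g v]
      CD(1,2) fin sum0 that by auto
  then show "x = 0" using u by (simp add: g_def)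
qed

lemma (in vector_space) dim_eq_dim_kernel_plus_dim_image:
  assumes f: "Vector_Spaces.linear scale scale f" and V: "subspace V"
    and S: "finite S" "V \<subseteq> span S"
  shows "dim V = dim {x\<in>V. f x = 0} + dim (f ` V)"
proof -
  interpret f: Vector_Spaces.linear scale scale f by (rule f)
  let ?K = "{x\<in>V. f x = 0}"
  obtain BK where BK: "BK \<subseteq> ?K" "independent BK" "?K \<subseteq> span BK" "card BK = dim ?K"
    using basis_exists by blast
  obtain B where B: "BK \<subseteq> B" "B \<subseteq> V" "independent B" "V \<subseteq> span B"
    using maximal_independent_subset_extend[of BK V] BK(1,2) by blast
  have finB: "finite B" using independent_span_bound[OF S(1) B(3)] B(2) S(2) by auto
  define C where "C = B - BK"
  have "inj_on f (span C)"
    unfolding f.inj_on_iff_eq_0[OF subspace_span]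
  proof (intro ballI impI)
    fix x assume x: "x \<in> span C" "f x = 0"
    have "span C \<subseteq> V" using B(2) C_def by (intro span_minimal[OF _ V]) auto
    with x BK(3) have "x \<in> span BK" by auto
    with x(1) show "x = 0"
      using span_inter_span_disjoint_eq_0[OF B(3) finB _ B(1)] C_def by blast
  qed
  then have indep: "independent (f ` C)" and inj: "inj_on f C"
    using f.independent_injective_image[of C] independent_mono[OF B(3)] C_def
      inj_on_subset[OF _ span_superset] by auto
  have "f ` V \<subseteq> span (f ` B)" using B(4) f.span_image by blast
  also have "\<dots> \<subseteq> span (insert 0 (f ` C))" using BK(1) C_def by (intro span_mono) auto
  finally have "dim (f ` V) = card (f ` C)"
    using B(2) C_def by (intro dim_unique[OF _ _ indep refl]) auto
  also have "\<dots> = card B - card BK"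
    using card_image[OF inj] C_def B(1) finB by (simp add: card_Diff_subset finite_subset)
  finally show ?thesis
    using basis_card_eq_dim[OF B(2,4,3)] BK(4) card_mono[OF finB B(1)] by simp
qed

abbreviation I3 :: "nat set" where "I3 \<equiv> {0, 1, 2}"

lemma sum_I3: "(\<Sum>i\<in>I3. g i) = g 0 + g 1 + g 2"
  by (simp add: add.assoc)

lemma mons_iff:
  "a \<in> mons d j \<longleftrightarrow> (\<forall>i. i \<notin> I3 \<longrightarrow> a i = 0) \<and> a 0 < d \<and> a 1 < d \<and> a 2 < d \<and> a 0 + a 1 + a 2 = j"
  unfolding mons_def by (auto simp: sum_I3)

definition mon3 :: "nat \<times> nat \<times> nat \<Rightarrow> nat \<Rightarrow> nat" where
  "mon3 = (\<lambda>(x, y, z) i. if i = 0 then x else if i = 1 then y else if i = 2 then z else 0)"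

lemma mon3_apply [simp]: "mon3 (x, y, z) 0 = x" "mon3 (x, y, z) (Suc 0) = y" "mon3 (x, y, z) 2 = z"
  by (simp_all add: mon3_def)

lemma mon3_in_mons_iff: "mon3 (x, y, z) \<in> mons d j \<longleftrightarrow> x < d \<and> y < d \<and> z < d \<and> x + y + z = j"
  unfolding mons_iff by (auto simp: mon3_def)

definition exps3 :: "(nat \<Rightarrow> nat) \<Rightarrow> nat \<times> nat \<times> nat" where
  "exps3 a = (a 0, a 1, a 2)"

lemma exps3_mon3 [simp]: "exps3 (mon3 t) = t"
  by (cases t) (simp add: exps3_def)

lemma mon3_exps3: "a \<in> mons d j \<Longrightarrow> mon3 (exps3 a) = a"
  unfolding mons_iff by (auto simp: mon3_def exps3_def)

lemma finite_mons: "finite (mons d j)"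
proof (rule finite_subset)
  show "mons d j \<subseteq> mon3 ` ({..<d} \<times> {..<d} \<times> {..<d})"
  proof
    fix a assume "a \<in> mons d j"
    then show "a \<in> mon3 ` ({..<d} \<times> {..<d} \<times> {..<d})"
      using mon3_exps3[of a] by (intro rev_image_eqI[of "exps3 a"]) (auto simp: mons_iff exps3_def)
  qed
qed simp

lemma mon3_comp_transpose:
  "mon3 (x, y, z) \<circ> transpose 0 1 = mon3 (y, x, z)"
  "mon3 (x, y, z) \<circ> transpose 1 2 = mon3 (x, z, y)"
  "mon3 (x, y, z) \<circ> transpose 0 2 = mon3 (z, y, x)"
  by (auto simp: mon3_def fun_eq_iff transpose_def)

lemma Acomp_subset_span:
  "Acomp TYPE('k::field) d j \<subseteq> coeffs.span ((\<lambda>a b. if b = a then 1 else 0) ` mons d j)"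
proof
  fix f :: "(nat \<Rightarrow> nat) \<Rightarrow> 'k" assume f: "f \<in> Acomp TYPE('k) d j"
  have "f = (\<Sum>a\<in>mons d j. fscale (f a) (\<lambda>b. if b = a then 1 else 0))"
  proof
    fix b
    have "(\<Sum>a\<in>mons d j. fscale (f a) (\<lambda>b. if b = a then 1 else 0)) b
        = (\<Sum>a\<in>mons d j. if b = a then f a else 0)"
      unfolding sum_apply by (rule sum.cong) simp_all
    also have "\<dots> = f b"
      using f finite_mons[of d j] by (cases "b \<in> mons d j") (simp_all add: Acomp_def)
    finally show "f b = (\<Sum>a\<in>mons d j. fscale (f a) (\<lambda>b. if b = a then 1 else 0)) b" by simp
  qed
  also have "\<dots> \<in> coeffs.span ((\<lambda>a b. if b = a then 1 else 0) ` mons d j)"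
    by (intro coeffs.span_sum coeffs.span_scale coeffs.span_base) auto
  finally show "f \<in> coeffs.span ((\<lambda>a b. if b = a then 1 else 0) ` mons d j)" .
qed

definition Ecoeff :: "nat \<Rightarrow> nat \<Rightarrow> 'k::field" where
  "Ecoeff d t = of_nat ((t + 1) * (d - (t + 1)))"

lemma Eop_apply: "Eop d f b = (\<Sum>k\<in>I3. Ecoeff d (b k) * f (b(k := b k + 1)))"
  by (simp add: Eop_def Ecoeff_def)

lemma Ecoeff_nonzero: "t + 1 < d \<Longrightarrow> Ecoeff d t \<noteq> (0 :: 'k::field_char_0)"
  unfolding Ecoeff_def of_nat_eq_0_iff by simp

lemma Eop_scale: "Eop d (fscale c f) = fscale c (Eop d f)"
  by (simp add: Eop_apply fun_eq_iff sum_distrib_left algebra_simps)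

lemma Eop_linear: "Vector_Spaces.linear fscale fscale (Eop d :: ((nat \<Rightarrow> nat) \<Rightarrow> 'k::field) \<Rightarrow> _)"
  unfolding Vector_Spaces.linear_iff using coeffs.vector_space_axioms Eop_scale
  by (auto simp: Eop_apply fun_eq_iff sum.distrib algebra_simps)

lemma mons_fun_upd_Suc:
  assumes "k \<in> I3" "b(k := b k + 1) \<in> mons d n"
  shows "b \<in> mons d (n - 1)"
  using assms unfolding mons_iff by (auto split: if_splits; metis fun_upd_other)

lemma Eop_Acomp:
  assumes "f \<in> Acomp TYPE('k::field) d n"
  shows "Eop d f \<in> Acomp TYPE('k) d (n - 1)"
  unfolding Acomp_def
proof (intro CollectI allI impI)
  fix b assume b: "b \<notin> mons d (n - 1)"
  have "b(k := b k + 1) \<notin> mons d n" if "k \<in> I3" for k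
    using b mons_fun_upd_Suc[OF that] by blast
  with assms show "Eop d f b = 0" unfolding Eop_apply Acomp_def by simp
qed

text \<open>A preimage under \<open>E\<close> is found coefficientwise by recursion on the exponent of \<open>x\<^sub>1\<close>:
  the coefficient \<open>Ecoeff d x\<close> in front of the unknown is nonzero as long as \<open>x + 1 < d\<close>.\<close>

fun Eop_preimage :: "nat \<Rightarrow> (nat \<times> nat \<times> nat \<Rightarrow> 'k::field) \<Rightarrow> nat \<Rightarrow> nat \<Rightarrow> nat \<Rightarrow> 'k" where
  "Eop_preimage d G 0 y z = 0"
| "Eop_preimage d G (Suc x) y z =
     (G (x, y, z) - Ecoeff d y * Eop_preimage d G x (Suc y) z
        - Ecoeff d z * Eop_preimage d G x y (Suc z)) / Ecoeff d x"

lemma Eop_surjective: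
  fixes g :: "(nat \<Rightarrow> nat) \<Rightarrow> 'k::field_char_0"
  assumes n: "1 \<le> n" "n < d" and g: "g \<in> Acomp TYPE('k) d (n - 1)"
  obtains f where "f \<in> Acomp TYPE('k) d n" "Eop d f = g"
proof
  define G where "G t = g (mon3 t)" for t
  define f where "f a = (if a \<in> mons d n then Eop_preimage d G (a 0) (a 1) (a 2) else 0)" for a
  show f: "f \<in> Acomp TYPE('k) d n" by (simp add: Acomp_def f_def)
  show "Eop d f = g"
  proof
    fix b
    show "Eop d f b = g b"
    proof (cases "b \<in> mons d (n - 1)")
      case False
      then show ?thesis using Eop_Acomp[OF f] g by (simp add: Acomp_def)
    next
      case True
      then have "b 0 + 1 < d" "b(0 := b 0 + 1) \<in> mons d n" "b(1 := b 1 + 1) \<in> mons d n"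
        "b(2 := b 2 + 1) \<in> mons d n"
        using n unfolding mons_iff by auto
      moreover have "g b = G (b 0, b 1, b 2)"
        unfolding G_def using mon3_exps3[OF True] by (simp add: exps3_def)
      ultimately show ?thesis
        using Ecoeff_nonzero[of "b 0" d, where 'k = 'k] by (simp add: Eop_apply sum_I3 f_def)
    qed
  qed
qed

lemma comp_permutes_in_mons_iff:
  assumes "s permutes I3"
  shows "a \<circ> s \<in> mons d j \<longleftrightarrow> a \<in> mons d j"
proof -
  have "(\<forall>i\<in>I3. a (s i) < d) \<longleftrightarrow> (\<forall>i\<in>I3. a i < d)"
    using permutes_image[OF assms] by (metis (no_types, lifting) image_iff)
  moreover have "(\<Sum>i\<in>I3. a (s i)) = (\<Sum>i\<in>I3. a i)"
    using sum.permute[OF assms, of a] by (simp add: o_def)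
  ultimately show ?thesis
    unfolding mons_def using permutes_not_in[OF assms] by (auto simp: o_def)
qed

lemma Eop_act:
  assumes s: "s permutes I3"
  shows "Eop d (act s f) = act s (Eop d f)"
proof
  fix b :: "nat \<Rightarrow> nat"
  have upd: "(b(s k := v)) \<circ> s = (b \<circ> s)(k := v)" for k v
    using permutes_inj[OF s] by (auto simp: fun_eq_iff inj_eq)
  have "Eop d (act s f) b = (\<Sum>k\<in>I3. Ecoeff d (b k) * f ((b(k := b k + 1)) \<circ> s))"
    by (simp add: Eop_apply act_def)
  also have "\<dots> = (\<Sum>k\<in>I3. Ecoeff d (b (s k)) * f ((b(s k := b (s k) + 1)) \<circ> s))"
    using sum.permute[OF s] by (simp add: o_def)
  also have "\<dots> = act s (Eop d f) b"
    by (simp add: Eop_apply act_def upd)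
  finally show "Eop d (act s f) b = act s (Eop d f) b" .
qed

lemma transpose_I3_cases:
  assumes "a \<in> I3" "b \<in> I3" "a \<noteq> b"
  shows "transpose a b \<in> {transpose 0 1, transpose 1 2, transpose 0 2}"
  using assms by (auto simp: transpose_commute)

lemma transpose_permutes_I3:
  "transpose 0 1 permutes I3" "transpose 1 2 permutes I3" "transpose 0 2 permutes I3"
  by (auto intro: permutes_swap_id)

lemma finite_I3: "finite I3"
  by simp

lemma card_permutations_I3: "card {s. s permutes I3} = 6"
  using card_permutations[of I3 3] by (simp add: fact_numeral)

subsection \<open>Orbit bases\<close>

definition sort3 :: "nat \<times> nat \<times> nat \<Rightarrow> nat \<times> nat \<times> nat" where
  "sort3 = (\<lambda>(x, y, z).
     (max x (max y z), x + y + z - max x (max y z) - min x (min y z), min x (min y z)))"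

definition sgn3 :: "nat \<times> nat \<times> nat \<Rightarrow> int" where
  "sgn3 = (\<lambda>(x, y, z). sgn ((int x - int y) * (int x - int z) * (int y - int z)))"

definition partitions3 :: "nat \<Rightarrow> (nat \<times> nat \<times> nat) set" where
  "partitions3 j = {(x, y, z). z \<le> y \<and> y \<le> x \<and> x + y + z = j}"

definition strict_partitions3 :: "nat \<Rightarrow> (nat \<times> nat \<times> nat) set" where
  "strict_partitions3 j = {(x, y, z). z < y \<and> y < x \<and> x + y + z = j}"

lemma finite_partitions3: "finite (partitions3 j)"
  by (rule finite_subset[of _ "{..j} \<times> {..j} \<times> {..j}"]) (auto simp: partitions3_def)

lemma strict_partitions3_subset: "strict_partitions3 j \<subseteq> partitions3 j"
  by (auto simp: partitions3_def strict_partitions3_def)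

lemma sort3_exps3_in_partitions3: "a \<in> mons d j \<Longrightarrow> sort3 (exps3 a) \<in> partitions3 j"
  by (auto simp: mons_iff exps3_def sort3_def partitions3_def max_def min_def)

lemma sgn3_eq_0_iff: "sgn3 (x, y, z) = 0 \<longleftrightarrow> x = y \<or> x = z \<or> y = z"
  by (simp add: sgn3_def sgn_eq_0_iff)

lemma sort3_in_strict_partitions3:
  "sgn3 (x, y, z) \<noteq> 0 \<Longrightarrow> sort3 (x, y, z) \<in> strict_partitions3 (x + y + z)"
  unfolding sgn3_eq_0_iff by (auto simp: sort3_def strict_partitions3_def max_def min_def)

lemma sort3_exps3_in_strict_partitions3:
  "a \<in> mons d j \<Longrightarrow> sgn3 (exps3 a) \<noteq> 0 \<Longrightarrow> sort3 (exps3 a) \<in> strict_partitions3 j"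
  using sort3_in_strict_partitions3[of "a 0" "a 1" "a 2"] by (simp add: mons_iff exps3_def)

lemma sort3_partition: "t \<in> partitions3 j \<Longrightarrow> sort3 t = t"
  by (auto simp: partitions3_def sort3_def max_def min_def)

lemma sgn3_strict_partition: "t \<in> strict_partitions3 j \<Longrightarrow> sgn3 t = 1"
  by (auto simp: strict_partitions3_def sgn3_def sgn_mult)

lemma sort3_swap:
  "sort3 (y, x, z) = sort3 (x, y, z)" "sort3 (x, z, y) = sort3 (x, y, z)"
  "sort3 (z, y, x) = sort3 (x, y, z)"
  by (auto simp: sort3_def max_def min_def)

lemma sgn3_swap:
  "sgn3 (y, x, z) = - sgn3 (x, y, z)" "sgn3 (x, z, y) = - sgn3 (x, y, z)"
  "sgn3 (z, y, x) = - sgn3 (x, y, z)"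
  unfolding sgn3_def prod.case sgn_mult by (simp_all add: sgn_if)

lemma sgn3_sort3: "sgn3 t \<noteq> 0 \<Longrightarrow> sgn3 (sort3 t) = 1"
  using sort3_in_strict_partitions3 sgn3_strict_partition by (cases t) blast

lemma exps3_comp_transpose_eq:
  "exps3 (b \<circ> transpose 0 1) = (b 1, b 0, b 2)"
  "exps3 (b \<circ> transpose 1 2) = (b 0, b 2, b 1)"
  "exps3 (b \<circ> transpose 0 2) = (b 2, b 1, b 0)"
  by (simp_all add: exps3_def transpose_def)

lemma exps3_comp_transpose:
  assumes "t \<in> {transpose 0 1, transpose 1 2, transpose 0 2}"
  shows "sort3 (exps3 (b \<circ> t)) = sort3 (exps3 b) \<and> sgn3 (exps3 (b \<circ> t)) = - sgn3 (exps3 b)"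
proof -
  from assms consider "t = transpose 0 1" | "t = transpose 1 2" | "t = transpose 0 2" by blast
  then show ?thesis
  proof cases
    case 1
    show ?thesis unfolding 1 exps3_comp_transpose_eq exps3_def[of b]
      by (rule conjI[OF sort3_swap(1) sgn3_swap(1)])
  next
    case 2
    show ?thesis unfolding 2 exps3_comp_transpose_eq exps3_def[of b]
      by (rule conjI[OF sort3_swap(2) sgn3_swap(2)])
  next
    case 3
    show ?thesis unfolding 3 exps3_comp_transpose_eq exps3_def[of b]
      by (rule conjI[OF sort3_swap(3) sgn3_swap(3)])
  qed
qed

lemma exps3_comp_permutes:
  assumes "s permutes I3"
  shows "sort3 (exps3 (b \<circ> s)) = sort3 (exps3 b) \<and> sgn3 (exps3 (b \<circ> s)) = sign s * sgn3 (exps3 b)"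
  using assms finite_I3
proof (induction arbitrary: b rule: permutes_induct)
  case id
  then show ?case by simp
next
  case (swap a a' p)
  let ?t = "transpose a a'"
  have "sort3 (exps3 (b \<circ> ?t)) = sort3 (exps3 b) \<and> sgn3 (exps3 (b \<circ> ?t)) = - sgn3 (exps3 b)"
    by (rule exps3_comp_transpose[OF transpose_I3_cases[OF swap(1-3)]])
  moreover have "sign (?t \<circ> p) = - sign p"
    using sign_compose[OF permutation_swap_id permutes_imp_permutation[OF finite_I3 swap(4)]]
      swap(3) by (simp add: sign_swap_id)
  ultimately show ?case
    using swap.IH[of "b \<circ> ?t"] unfolding o_assoc by (simp only: mult_minus_left mult_minus_right)
qed

lemma symmetric_eq_sorted:
  assumes "\<And>x y z. F (y, x, z) = F (x, y, z)" "\<And>x y z. F (x, z, y) = F (x, y, z)"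
  shows "F t = F (sort3 t)"
  using assms by (cases t) (auto simp: sort3_def max_def min_def)

lemma eq_neg_self_iff: "(a :: 'k::field_char_0) = - a \<longleftrightarrow> a = 0"
  by (auto simp: eq_neg_iff_add_eq_0 simp flip: mult_2)

lemma alternating_eq_sorted:
  fixes F :: "nat \<times> nat \<times> nat \<Rightarrow> 'k::field_char_0"
  assumes swap: "\<And>x y z. F (y, x, z) = - F (x, y, z)" "\<And>x y z. F (x, z, y) = - F (x, y, z)"
  shows "F t = of_int (sgn3 t) * F (sort3 t)"
proof (cases "sgn3 t = 0")
  case True
  have zero1: "F (x, x, z) = 0" for x z using swap(1)[of x x z] eq_neg_self_iff by metis
  have zero2: "F (x, y, y) = 0" for x y using swap(2)[of x y y] eq_neg_self_iff by metis
  have zero3: "F (x, y, x) = 0" for x y using swap(2)[of x x y] zero1[of x y] by simp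
  obtain x y z where "t = (x, y, z)" by (cases t)
  with True show ?thesis by (auto simp: sgn3_eq_0_iff zero1 zero2 zero3)
next
  case False
  have "of_int (sgn3 t) * F t = of_int (sgn3 (sort3 t)) * F (sort3 t)"
  proof (rule symmetric_eq_sorted[where F = "\<lambda>t. of_int (sgn3 t) * F t"])
    fix x y z
    show "of_int (sgn3 (y, x, z)) * F (y, x, z) = of_int (sgn3 (x, y, z)) * F (x, y, z)"
      unfolding swap(1)[of x y z] sgn3_swap(1)[of x y z] by simp
    show "of_int (sgn3 (x, z, y)) * F (x, z, y) = of_int (sgn3 (x, y, z)) * F (x, y, z)"
      unfolding swap(2)[of x y z] sgn3_swap(2)[of x y z] by simp
  qed
  moreover have "sgn3 (sort3 t) = 1"
    using False by (rule sgn3_sort3)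
  ultimately have key: "of_int (sgn3 t) * F t = F (sort3 t)" by simp
  have "sgn3 t = 1 \<or> sgn3 t = -1"
    using False by (cases t) (auto simp: sgn3_def sgn_if)
  then have "of_int (sgn3 t) * of_int (sgn3 t) = (1 :: 'k)" by auto
  then have "F t = (of_int (sgn3 t) * of_int (sgn3 t)) * F t" by simp
  also have "\<dots> = of_int (sgn3 t) * F (sort3 t)" by (simp only: mult.assoc key)
  finally show ?thesis .
qed

text \<open>With weight \<open>1\<close> resp. \<open>sgn3\<close>, \<open>orbit_fun w d j c\<close> is the orbit sum resp. signed orbit sum
  of the monomials of degree \<open>j\<close> with sorted exponent triple \<open>c\<close>.\<close>

definition orbit_fun ::
    "(nat \<times> nat \<times> nat \<Rightarrow> 'k::field) \<Rightarrow> nat \<Rightarrow> nat \<Rightarrow> nat \<times> nat \<times> nat \<Rightarrow> (nat \<Rightarrow> nat) \<Rightarrow> 'k" where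
  "orbit_fun w d j c a = (if a \<in> mons d j \<and> sort3 (exps3 a) = c then w (exps3 a) else 0)"

lemma orbit_fun_mon3:
  assumes "j < d" "c \<in> partitions3 j" "c' \<in> partitions3 j" "w c = 1"
  shows "orbit_fun w d j c' (mon3 c) = (if c' = c then 1 else 0)"
proof -
  obtain x y z where "c = (x, y, z)" by (cases c)
  then show ?thesis
    using assms sort3_partition[OF assms(2)]
    by (auto simp: orbit_fun_def mon3_in_mons_iff partitions3_def)
qed

lemma eq_sum_orbit_funs:
  fixes f :: "(nat \<Rightarrow> nat) \<Rightarrow> 'k::field"
  assumes f: "f \<in> Acomp TYPE('k) d j" and T: "finite T"
    and orbit: "\<And>t. f (mon3 t) = w t * f (mon3 (sort3 t))"
    and supp: "\<And>a. a \<in> mons d j \<Longrightarrow> w (exps3 a) \<noteq> 0 \<Longrightarrow> sort3 (exps3 a) \<in> T"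
  shows "f = (\<Sum>c\<in>T. fscale (f (mon3 c)) (orbit_fun w d j c))"
proof
  fix a
  show "f a = (\<Sum>c\<in>T. fscale (f (mon3 c)) (orbit_fun w d j c)) a"
  proof (cases "a \<in> mons d j")
    case False
    then show ?thesis using f by (simp add: sum_apply orbit_fun_def Acomp_def)
  next
    case True
    have "(\<Sum>c\<in>T. fscale (f (mon3 c)) (orbit_fun w d j c)) a
        = (\<Sum>c\<in>T. if c = sort3 (exps3 a) then f (mon3 c) * w (exps3 a) else 0)"
      unfolding sum_apply orbit_fun_def using True by (intro sum.cong) auto
    also have "\<dots> = f a"
      using T orbit[of "exps3 a"] supp[OF True] mon3_exps3[OF True]
      by (cases "w (exps3 a) = 0") auto
    finally show ?thesis by simp
  qed
qed

lemma dual_evaluation_independent: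
  fixes B :: "'i \<Rightarrow> (nat \<Rightarrow> nat) \<Rightarrow> 'k::field"
  assumes dual: "\<And>c c'. c \<in> S \<Longrightarrow> c' \<in> S \<Longrightarrow> B c' (p c) = (if c' = c then 1 else 0)"
  shows "inj_on B S" "coeffs.independent (B ` S)"
proof -
  show inj: "inj_on B S"
  proof (rule inj_onI)
    fix c c' assume "c \<in> S" "c' \<in> S" "B c = B c'"
    then have "B c' (p c) = 1" using dual[of c c] by simp
    then show "c = c'" using dual[of c c'] \<open>c \<in> S\<close> \<open>c' \<in> S\<close> by (simp split: if_splits)
  qed
  show "coeffs.independent (B ` S)"
    unfolding coeffs.independent_explicit_finite_subsets
  proof (intro allI impI ballI)
    fix U u v
    assume U: "U \<subseteq> B ` S" "finite U" and sum0: "(\<Sum>v\<in>U. fscale (u v) v) = 0" and v: "v \<in> U"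
    obtain c where c: "c \<in> S" "v = B c" using U(1) v by auto
    have "(\<Sum>v'\<in>U. fscale (u v') v') (p c) = (\<Sum>v'\<in>U. if v' = v then u v' else 0)"
      unfolding sum_apply fscale_apply
    proof (intro sum.cong refl)
      fix v' assume "v' \<in> U"
      then obtain c' where c': "c' \<in> S" "v' = B c'" using U(1) by auto
      then show "u v' * v' (p c) = (if v' = v then u v' else 0)"
        using dual[OF c(1) c'(1)] c inj_on_eq_iff[OF inj c'(1) c(1)] by auto
    qed
    also have "\<dots> = u v" using U(2) v by simp
    finally show "u v = 0" using sum0 by simp
  qed
qed

lemma dim_eq_card_orbit_funs:
  fixes V :: "((nat \<Rightarrow> nat) \<Rightarrow> 'k::field) set"
  assumes "j < d" and T: "T \<subseteq> partitions3 j" "\<And>t. t \<in> T \<Longrightarrow> w t = 1"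
    and supp: "\<And>a. a \<in> mons d j \<Longrightarrow> w (exps3 a) \<noteq> 0 \<Longrightarrow> sort3 (exps3 a) \<in> T"
    and V: "orbit_fun w d j ` T \<subseteq> V" "V \<subseteq> Acomp TYPE('k) d j"
    and orbit: "\<And>f t. f \<in> V \<Longrightarrow> f (mon3 t) = w t * f (mon3 (sort3 t))"
  shows "coeffs.dim V = card T"
proof -
  have "orbit_fun w d j c' (mon3 c) = (if c' = c then 1 else 0)" if "c \<in> T" "c' \<in> T" for c c'
    using orbit_fun_mon3[OF assms(1)] T that by blast
  note indep = dual_evaluation_independent[where p = mon3, OF this]
  have finT: "finite T" using T(1) finite_partitions3 finite_subset by blast
  show ?thesis
  proof (rule coeffs.dim_unique[OF V(1) _ indep(2) card_image[OF indep(1)]])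
    show "V \<subseteq> coeffs.span (orbit_fun w d j ` T)"
    proof
      fix f assume "f \<in> V"
      then have "f = (\<Sum>c\<in>T. fscale (f (mon3 c)) (orbit_fun w d j c))"
        using V(2) finT orbit supp by (intro eq_sum_orbit_funs) auto
      also have "\<dots> \<in> coeffs.span (orbit_fun w d j ` T)"
        by (intro coeffs.span_sum coeffs.span_scale coeffs.span_base) auto
      finally show "f \<in> coeffs.span (orbit_fun w d j ` T)" .
    qed
  qed
qed

subsection \<open>Isotypic components for a character of \<open>S\<^sub>3\<close>\<close>

locale S3_character =
  fixes \<chi> :: "(nat \<Rightarrow> nat) \<Rightarrow> 'k::field_char_0"
  assumes character_comp: "\<sigma> permutes I3 \<Longrightarrow> \<tau> permutes I3 \<Longrightarrow> \<chi> (\<sigma> \<circ> \<tau>) = \<chi> \<sigma> * \<chi> \<tau>"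
    and character_square: "\<sigma> permutes I3 \<Longrightarrow> \<chi> \<sigma> * \<chi> \<sigma> = 1"
begin

definition isotypic :: "nat \<Rightarrow> nat \<Rightarrow> ((nat \<Rightarrow> nat) \<Rightarrow> 'k) set" where
  "isotypic d j = {f \<in> Acomp TYPE('k) d j. \<forall>s. s permutes I3 \<longrightarrow> act s f = fscale (\<chi> s) f}"

definition multiplicity :: "nat \<Rightarrow> nat \<Rightarrow> nat" where
  "multiplicity d j = coeffs.dim {f \<in> isotypic d j. Eop d f = 0}"

lemma subspace_isotypic: "coeffs.subspace (isotypic d j)"
  unfolding coeffs.subspace_def isotypic_def Acomp_def
  by (auto simp: act_def fscale_def fun_eq_iff algebra_simps)

lemma isotypic_apply_comp:
  assumes "f \<in> isotypic d j" "s permutes I3"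
  shows "f (b \<circ> s) = \<chi> s * f b"
  using assms unfolding isotypic_def act_def by (auto simp: fun_eq_iff)

definition reynolds :: "((nat \<Rightarrow> nat) \<Rightarrow> 'k) \<Rightarrow> (nat \<Rightarrow> nat) \<Rightarrow> 'k" where
  "reynolds f = fscale (1/6) (\<Sum>s\<in>{s. s permutes I3}. fscale (\<chi> s) (act s f))"

lemma reynolds_apply: "reynolds f b = (1/6) * (\<Sum>s\<in>{s. s permutes I3}. \<chi> s * f (b \<circ> s))"
  by (simp add: reynolds_def sum_apply act_def)

lemma reynolds_in_isotypic:
  assumes f: "f \<in> Acomp TYPE('k) d j"
  shows "reynolds f \<in> isotypic d j"
  unfolding isotypic_def
proof (intro CollectI conjI allI impI)
  show "reynolds f \<in> Acomp TYPE('k) d j"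
    using f comp_permutes_in_mons_iff by (simp add: Acomp_def reynolds_apply)
next
  fix \<sigma> :: "nat \<Rightarrow> nat" assume \<sigma>: "\<sigma> permutes I3"
  let ?S = "\<lambda>b. \<Sum>s\<in>{s. s permutes I3}. \<chi> s * f (b \<circ> s)"
  have "?S b = (\<Sum>s\<in>{s. s permutes I3}. \<chi> (\<sigma> \<circ> s) * f (b \<circ> (\<sigma> \<circ> s)))" for b
    by (rule setum_permutations_compose_left[OF \<sigma>])
  also have "\<dots> b = \<chi> \<sigma> * ?S (b \<circ> \<sigma>)" for b
    unfolding sum_distrib_left
    by (intro sum.cong) (simp_all add: character_comp[OF \<sigma>] o_assoc mult_ac)
  finally have S0: "?S b = \<chi> \<sigma> * ?S (b \<circ> \<sigma>)" for b .
  have S: "?S (b \<circ> \<sigma>) = \<chi> \<sigma> * ?S b" for b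
    using S0[of b] character_square[OF \<sigma>] by (simp add: mult.assoc[symmetric])
  show "act \<sigma> (reynolds f) = fscale (\<chi> \<sigma>) (reynolds f)"
  proof
    fix b
    have "act \<sigma> (reynolds f) b = 1/6 * ?S (b \<circ> \<sigma>)"
      by (simp add: act_def reynolds_apply)
    also have "\<dots> = \<chi> \<sigma> * (1/6 * ?S b)"
      by (simp only: S mult.left_commute)
    finally show "act \<sigma> (reynolds f) b = fscale (\<chi> \<sigma>) (reynolds f) b"
      by (simp only: fscale_apply reynolds_apply)
  qed
qed

lemma reynolds_fixes_isotypic:
  assumes "f \<in> isotypic d j"
  shows "reynolds f = f"
proof
  fix b
  have "\<chi> s * f (b \<circ> s) = f b" if "s permutes I3" for s
    using isotypic_apply_comp[OF assms that] character_square[OF that]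
    by (simp add: mult.assoc[symmetric])
  then show "reynolds f b = f b"
    using card_permutations_I3 by (simp add: reynolds_apply)
qed

lemma Eop_reynolds: "Eop d (reynolds f) = reynolds (Eop d f)"
proof -
  interpret E: Vector_Spaces.linear fscale fscale "Eop d :: ((nat \<Rightarrow> nat) \<Rightarrow> 'k) \<Rightarrow> _"
    by (rule Eop_linear)
  show ?thesis
    unfolding reynolds_def E.scale E.sum
    by (intro arg_cong[of _ _ "fscale _"] sum.cong) (simp_all add: Eop_act)
qed

lemma Eop_image_isotypic:
  assumes n: "1 \<le> n" "n < d"
  shows "Eop d ` isotypic d n = isotypic d (n - 1)"
proof
  show "Eop d ` isotypic d n \<subseteq> isotypic d (n - 1)"
  proof
    fix g assume "g \<in> Eop d ` isotypic d n"
    then obtain f where f: "f \<in> isotypic d n" "g = Eop d f" by blast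
    have "act s g = fscale (\<chi> s) g" if "s permutes I3" for s
    proof -
      have "act s g = Eop d (act s f)" using Eop_act[OF that, of d f] f(2) by simp
      also have "\<dots> = fscale (\<chi> s) g" using f that by (simp add: isotypic_def Eop_scale)
      finally show ?thesis .
    qed
    moreover have "g \<in> Acomp TYPE('k) d (n - 1)"
      using f Eop_Acomp unfolding isotypic_def by blast
    ultimately show "g \<in> isotypic d (n - 1)" unfolding isotypic_def by blast
  qed
  show "isotypic d (n - 1) \<subseteq> Eop d ` isotypic d n"
  proof
    fix g assume g: "g \<in> isotypic d (n - 1)"
    then obtain f where f: "f \<in> Acomp TYPE('k) d n" "Eop d f = g"
      using Eop_surjective[OF n] unfolding isotypic_def by blast
    have "Eop d (reynolds f) = g" using Eop_reynolds f(2) reynolds_fixes_isotypic[OF g] by simp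
    then show "g \<in> Eop d ` isotypic d n" using reynolds_in_isotypic[OF f(1)] by blast
  qed
qed

lemma multiplicity_plus_dim_isotypic:
  assumes "1 \<le> n" "n < d"
  shows "multiplicity d n + coeffs.dim (isotypic d (n - 1)) = coeffs.dim (isotypic d n)"
proof -
  have "isotypic d n \<subseteq> coeffs.span ((\<lambda>a b. if b = a then 1 else 0) ` mons d n)"
    using Acomp_subset_span by (auto simp: isotypic_def)
  then have "coeffs.dim (isotypic d n) = multiplicity d n + coeffs.dim (Eop d ` isotypic d n)"
    unfolding multiplicity_def
    by (intro coeffs.dim_eq_dim_kernel_plus_dim_image[OF Eop_linear subspace_isotypic])
      (simp_all add: finite_mons)
  with Eop_image_isotypic[OF assms] show ?thesis by simp
qed

lemma isotypic_swap:
  assumes "f \<in> isotypic d j"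
  shows "f (mon3 (y, x, z)) = \<chi> (transpose 0 1) * f (mon3 (x, y, z))"
    "f (mon3 (x, z, y)) = \<chi> (transpose 1 2) * f (mon3 (x, y, z))"
  using isotypic_apply_comp[OF assms transpose_permutes_I3(1), of "mon3 (x, y, z)"]
    isotypic_apply_comp[OF assms transpose_permutes_I3(2), of "mon3 (x, y, z)"]
  by (simp_all only: mon3_comp_transpose)

lemma orbit_fun_in_isotypic:
  assumes "\<And>b s. s permutes I3 \<Longrightarrow> w (exps3 (b \<circ> s)) = \<chi> s * w (exps3 b)"
  shows "orbit_fun w d j c \<in> isotypic d j"
  unfolding isotypic_def
proof (intro CollectI conjI allI impI)
  show "orbit_fun w d j c \<in> Acomp TYPE('k) d j" by (simp add: Acomp_def orbit_fun_def)
  fix s :: "nat \<Rightarrow> nat" assume s: "s permutes I3"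
  show "act s (orbit_fun w d j c) = fscale (\<chi> s) (orbit_fun w d j c)"
    using exps3_comp_permutes[OF s] assms[OF s] comp_permutes_in_mons_iff[OF s]
    by (simp add: act_def fun_eq_iff orbit_fun_def)
qed

end

interpretation trivial: S3_character "\<lambda>_. 1 :: 'k::field_char_0"
  by unfold_locales simp_all

interpretation alternating: S3_character "\<lambda>s. of_int (sign s) :: 'k::field_char_0"
proof
  fix \<sigma> \<tau> :: "nat \<Rightarrow> nat" assume "\<sigma> permutes I3" "\<tau> permutes I3"
  then show "of_int (sign (\<sigma> \<circ> \<tau>)) = (of_int (sign \<sigma>) * of_int (sign \<tau>) :: 'k)"
    using permutes_imp_permutation[OF finite_I3] by (simp add: sign_compose)
qed (simp flip: of_int_mult)

lemma triv_eq_multiplicity: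
  "triv TYPE('k::field_char_0) d j = trivial.multiplicity TYPE('k) d j"
  unfolding triv_def trivial.multiplicity_def trivial.isotypic_def kerE_def
  by (rule arg_cong[of _ _ coeffs.dim]) (auto simp: zero_fun_def)

lemma sgn_mult_eq_multiplicity:
  "sgn_mult TYPE('k::field_char_0) d j = alternating.multiplicity TYPE('k) d j"
  unfolding sgn_mult_def alternating.multiplicity_def alternating.isotypic_def kerE_def
  by (rule arg_cong[of _ _ coeffs.dim]) (auto simp: zero_fun_def)

lemma dim_trivial_isotypic:
  assumes "j < d"
  shows "coeffs.dim (trivial.isotypic d j :: ((nat \<Rightarrow> nat) \<Rightarrow> 'k::field_char_0) set)
    = card (partitions3 j)"
proof (rule dim_eq_card_orbit_funs[OF assms order_refl, where w = "\<lambda>_. 1"])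
  show "orbit_fun (\<lambda>_. 1) d j ` partitions3 j \<subseteq> (trivial.isotypic d j :: ((nat \<Rightarrow> nat) \<Rightarrow> 'k) set)"
    by (intro image_subsetI trivial.orbit_fun_in_isotypic) simp
  show "f (mon3 t) = 1 * f (mon3 (sort3 t))"
    if "f \<in> (trivial.isotypic d j :: ((nat \<Rightarrow> nat) \<Rightarrow> 'k) set)" for f t
  proof -
    have "f (mon3 (y, x, z)) = f (mon3 (x, y, z))" "f (mon3 (x, z, y)) = f (mon3 (x, y, z))"
      for x y z
      using trivial.isotypic_swap[OF that, where x = x and y = y and z = z] by simp_all
    then show ?thesis using symmetric_eq_sorted[where F = "\<lambda>t. f (mon3 t)", of t] by simp
  qed
qed (auto simp: trivial.isotypic_def intro: sort3_exps3_in_partitions3)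

lemma dim_alternating_isotypic:
  assumes "j < d"
  shows "coeffs.dim (alternating.isotypic d j :: ((nat \<Rightarrow> nat) \<Rightarrow> 'k::field_char_0) set)
    = card (strict_partitions3 j)"
proof (rule dim_eq_card_orbit_funs[OF assms strict_partitions3_subset,
      where w = "\<lambda>t. of_int (sgn3 t)"])
  have w: "of_int (sgn3 (exps3 (b \<circ> s))) = (of_int (sign s) * of_int (sgn3 (exps3 b)) :: 'k)"
    if "s permutes I3" for b s
    using exps3_comp_permutes[OF that, of b] by simp
  show "orbit_fun (\<lambda>t. of_int (sgn3 t)) d j ` strict_partitions3 j
      \<subseteq> (alternating.isotypic d j :: ((nat \<Rightarrow> nat) \<Rightarrow> 'k) set)"
    by (intro image_subsetI alternating.orbit_fun_in_isotypic) (simp add: w)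
  show "f (mon3 t) = of_int (sgn3 t) * f (mon3 (sort3 t))"
    if "f \<in> (alternating.isotypic d j :: ((nat \<Rightarrow> nat) \<Rightarrow> 'k) set)" for f t
  proof -
    have "f (mon3 (y, x, z)) = - f (mon3 (x, y, z))" "f (mon3 (x, z, y)) = - f (mon3 (x, y, z))"
      for x y z
      using alternating.isotypic_swap[OF that, where x = x and y = y and z = z]
      by (simp_all add: sign_swap_id)
    then show ?thesis by (rule alternating_eq_sorted[where F = "\<lambda>t. f (mon3 t)"])
  qed
qed (auto simp: alternating.isotypic_def sgn3_strict_partition
    intro: sort3_exps3_in_strict_partitions3)

subsection \<open>Counting sorted exponent triples\<close>

lemma partitions3_eq:
  assumes "1 \<le> n"
  shows "partitions3 n = (\<lambda>(x, y, z). (Suc x, y, z)) ` partitions3 (n - 1)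
    \<union> (\<lambda>x. (x, x, n - 2 * x)) ` {(n + 2) div 3 .. n div 2}"
proof (intro set_eqI iffI)
  fix t assume "t \<in> partitions3 n"
  then obtain x y z where t: "t = (x, y, z)" "z \<le> y" "y \<le> x" "x + y + z = n"
    by (auto simp: partitions3_def)
  show "t \<in> (\<lambda>(x, y, z). (Suc x, y, z)) ` partitions3 (n - 1)
      \<union> (\<lambda>x. (x, x, n - 2 * x)) ` {(n + 2) div 3 .. n div 2}"
  proof (cases "x = y")
    case True
    then have "x \<in> {(n + 2) div 3 .. n div 2}" using t by auto
    with True t show ?thesis by auto
  next
    case False
    then have "(x - 1, y, z) \<in> partitions3 (n - 1)" using t by (auto simp: partitions3_def)
    with False t show ?thesis by (intro UnI1 rev_image_eqI[of "(x - 1, y, z)"]) auto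
  qed
qed (use assms in \<open>auto simp: partitions3_def\<close>)

lemma card_partitions3:
  assumes "1 \<le> n"
  shows "card (partitions3 n) = card (partitions3 (n - 1)) + (Suc (n div 2) - (n + 2) div 3)"
proof -
  let ?A = "(\<lambda>(x, y, z). (Suc x, y, z)) ` partitions3 (n - 1)"
  let ?B = "(\<lambda>x. (x, x, n - 2 * x)) ` {(n + 2) div 3 .. n div 2}"
  have "?A \<inter> ?B = {}" by (auto simp: partitions3_def)
  then have "card (partitions3 n) = card ?A + card ?B"
    unfolding partitions3_eq[OF assms]
    by (intro card_Un_disjoint finite_imageI finite_partitions3) simp_all
  also have "\<dots> = card (partitions3 (n - 1)) + card {(n + 2) div 3 .. n div 2}"
    by (intro arg_cong2[where f = "(+)"] card_image) (auto simp: inj_on_def)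
  finally show ?thesis by simp
qed

lemma strict_partitions3_eq:
  assumes "1 \<le> n"
  shows "strict_partitions3 n = (\<lambda>(x, y, z). (Suc x, y, z)) ` strict_partitions3 (n - 1)
    \<union> (\<lambda>y. (Suc y, y, n - 2 * y - 1)) ` {(n + 2) div 3 ..< (n + 1) div 2}"
proof (intro set_eqI iffI)
  fix t assume "t \<in> strict_partitions3 n"
  then obtain x y z where t: "t = (x, y, z)" "z < y" "y < x" "x + y + z = n"
    by (auto simp: strict_partitions3_def)
  show "t \<in> (\<lambda>(x, y, z). (Suc x, y, z)) ` strict_partitions3 (n - 1)
      \<union> (\<lambda>y. (Suc y, y, n - 2 * y - 1)) ` {(n + 2) div 3 ..< (n + 1) div 2}"
  proof (cases "x = Suc y")
    case True
    then have "y \<in> {(n + 2) div 3 ..< (n + 1) div 2}" using t by auto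
    with True t show ?thesis by auto
  next
    case False
    then have "(x - 1, y, z) \<in> strict_partitions3 (n - 1)"
      using t by (auto simp: strict_partitions3_def)
    with False t show ?thesis by (intro UnI1 rev_image_eqI[of "(x - 1, y, z)"]) auto
  qed
qed (use assms in \<open>auto simp: strict_partitions3_def\<close>)

lemma card_strict_partitions3:
  assumes "1 \<le> n"
  shows "card (strict_partitions3 n)
    = card (strict_partitions3 (n - 1)) + ((n + 1) div 2 - (n + 2) div 3)"
proof -
  let ?A = "(\<lambda>(x, y, z). (Suc x, y, z)) ` strict_partitions3 (n - 1)"
  let ?B = "(\<lambda>y. (Suc y, y, n - 2 * y - 1)) ` {(n + 2) div 3 ..< (n + 1) div 2}"
  have "finite (strict_partitions3 (n - 1))"
    using finite_partitions3 strict_partitions3_subset by (rule finite_subset[rotated])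
  moreover have "?A \<inter> ?B = {}" by (auto simp: strict_partitions3_def)
  ultimately have "card (strict_partitions3 n) = card ?A + card ?B"
    unfolding strict_partitions3_eq[OF assms] by (intro card_Un_disjoint finite_imageI) simp_all
  also have "\<dots> = card (strict_partitions3 (n - 1)) + card {(n + 2) div 3 ..< (n + 1) div 2}"
    by (intro arg_cong2[where f = "(+)"] card_image) (auto simp: inj_on_def)
  finally show ?thesis by simp
qed

lemma triv_formula:
  assumes "1 \<le> n" "n < d"
  shows "triv TYPE('k::field_char_0) d n = Suc (n div 2) - (n + 2) div 3"
proof -
  have "n - 1 < d" using assms by simp
  then have "triv TYPE('k) d n + card (partitions3 (n - 1)) = card (partitions3 n)"
    using trivial.multiplicity_plus_dim_isotypic[OF assms, where 'k = 'k]
      dim_trivial_isotypic[OF assms(2), where 'k = 'k]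
      dim_trivial_isotypic[of "n - 1" d, where 'k = 'k]
    by (simp add: triv_eq_multiplicity)
  with card_partitions3[OF assms(1)] show ?thesis by linarith
qed

lemma sgn_mult_formula:
  assumes "1 \<le> n" "n < d"
  shows "sgn_mult TYPE('k::field_char_0) d n = (n + 1) div 2 - (n + 2) div 3"
proof -
  have "n - 1 < d" using assms by simp
  then have "sgn_mult TYPE('k) d n + card (strict_partitions3 (n - 1))
      = card (strict_partitions3 n)"
    using alternating.multiplicity_plus_dim_isotypic[OF assms, where 'k = 'k]
      dim_alternating_isotypic[OF assms(2), where 'k = 'k]
      dim_alternating_isotypic[of "n - 1" d, where 'k = 'k]
    by (simp add: sgn_mult_eq_multiplicity)
  with card_strict_partitions3[OF assms(1)] show ?thesis by linarith
qed

lemma odd_div_identities: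
  assumes "odd (d::nat)"
  shows "Suc ((d - 1) div 2) = (d - 1) div 6 + 1 + (d + 1) div 3
    \<and> d div 2 = (d - 1) div 6 + (d + 1) div 3"
proof -
  obtain k where "d = 6 * k + d mod 6" by (metis div_mult_mod_eq mult.commute)
  moreover have "d mod 6 = 1 \<or> d mod 6 = 3 \<or> d mod 6 = 5" using assms by presburger
  ultimately have "d = 6 * k + 1 \<or> d = 6 * k + 3 \<or> d = 6 * k + 5" by linarith
  then show ?thesis by (elim disjE) (simp; presburger)+
qed

lemma even_div_identities:
  assumes "even (d::nat)" "d \<ge> 4"
  shows "Suc ((d - 1) div 2) = (d + 2) div 6 + (d + 1) div 3
    \<and> d div 2 = (d + 2) div 6 + (d + 1) div 3"
proof -
  obtain k where "d = 6 * k + d mod 6" by (metis div_mult_mod_eq mult.commute)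
  moreover have "d mod 6 = 0 \<or> d mod 6 = 2 \<or> d mod 6 = 4" using assms(1) by presburger
  ultimately have "d = 6 * k \<or> d = 6 * k + 2 \<or> d = 6 * k + 4" by linarith
  moreover have "d = 6 * k \<Longrightarrow> d = 6 * (k - 1) + 6" using assms(2) by (cases k) simp_all
  ultimately have "d = 6 * (k - 1) + 6 \<or> d = 6 * k + 2 \<or> d = 6 * k + 4" by blast
  then show ?thesis by (elim disjE) (simp; presburger)+
qed

theorem lemma5p1:
  fixes d :: nat
  assumes "alg_closed TYPE('k::field_char_0)"
  shows "(odd d \<and> d \<ge> 3 \<longrightarrow>
            triv TYPE('k) d (d - 1) = (d - 1) div 6 + 1 \<and>
            sgn_mult TYPE('k) d (d - 1) = (d - 1) div 6)
       \<and> (even d \<and> d \<ge> 4 \<longrightarrow>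
            triv TYPE('k) d (d - 1) = (d + 2) div 6 \<and>
            sgn_mult TYPE('k) d (d - 1) = (d + 2) div 6)"
proof (intro conjI impI)
  assume d: "odd d \<and> d \<ge> 3"
  then have n: "1 \<le> d - 1" "d - 1 < d" and idx: "d - 1 + 2 = d + 1" "d - 1 + 1 = d" by auto
  from d have "Suc ((d - 1) div 2) = (d - 1) div 6 + 1 + (d + 1) div 3"
    "d div 2 = (d - 1) div 6 + (d + 1) div 3" using odd_div_identities by blast+
  moreover note triv_formula[OF n, where 'k = 'k, unfolded idx]
    sgn_mult_formula[OF n, where 'k = 'k, unfolded idx]
  ultimately show "triv TYPE('k) d (d - 1) = (d - 1) div 6 + 1"
    and "sgn_mult TYPE('k) d (d - 1) = (d - 1) div 6"
    by linarith+
next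
  assume d: "even d \<and> d \<ge> 4"
  then have n: "1 \<le> d - 1" "d - 1 < d" and idx: "d - 1 + 2 = d + 1" "d - 1 + 1 = d" by auto
  from d have "Suc ((d - 1) div 2) = (d + 2) div 6 + (d + 1) div 3"
    "d div 2 = (d + 2) div 6 + (d + 1) div 3" using even_div_identities by blast+
  moreover note triv_formula[OF n, where 'k = 'k, unfolded idx]
    sgn_mult_formula[OF n, where 'k = 'k, unfolded idx]
  ultimately show "triv TYPE('k) d (d - 1) = (d + 2) div 6"
    and "sgn_mult TYPE('k) d (d - 1) = (d + 2) div 6"
    by linarith+
qed

end
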